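(* For integers $m\neq 0$ and $n$, define \[ \mathcal{I}_1^{(m,n)}=\frac{1}{|m|}\sup_{0\le s\le |m|}\int_0^s K_{n+1}(s)I_n(t)\,t\,dt,\qquad \mathcal{I}_2^{(m,n)}=\frac{1}{|m|}\sup_{0\le t\le |m|}\int_t^{|m|} K_{n+1}(s)I_n(t)\,s\,ds. \] Then there is a constant $C$, independent of $m$ and $n$, such that for $i=1,2$ and all integers $m\neq 0$, $n$, \[ \mathcal{I}_i^{(m,n)}\le\frac{C}{\sqrt{1+m^2+n^2}}. \]
   Context: $I_n,K_n$ are the modified Bessel functions of the first and second kind of integer order $n$: $I_n(t)=\frac1\pi\int_0^\pi e^{t\cos\alpha}\cos(n\alpha)\,d\alpha$, $K_n(t)=\int_0^\infty e^{-t\cosh\alpha}\cosh(n\alpha)\,d\alpha$ for $t>0$. *)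

theory Defs
  imports "HOL-Analysis.Analysis"
begin

definition besselI :: "int \<Rightarrow> real \<Rightarrow> real" where
  "besselI n t = (1 / pi) * integral {0..pi} (\<lambda>\<alpha>. exp (t * cos \<alpha>) * cos (real_of_int n * \<alpha>))"

text \<open>Meant for t > 0.\<close>
definition besselK :: "int \<Rightarrow> real \<Rightarrow> real" where
  "besselK n t = integral {0..} (\<lambda>\<alpha>. exp (- t * cosh \<alpha>) * cosh (real_of_int n * \<alpha>))"

definition calI1 :: "int \<Rightarrow> int \<Rightarrow> real" where
  "calI1 m n = (1 / \<bar>real_of_int m\<bar>) *
     (SUP s\<in>{0..\<bar>real_of_int m\<bar>}.
        integral {0..s} (\<lambda>t. besselK (n + 1) s * besselI n t * t))"

definition calI2 :: "int \<Rightarrow> int \<Rightarrow> real" where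
  "calI2 m n = (1 / \<bar>real_of_int m\<bar>) *
     (SUP t\<in>{0..\<bar>real_of_int m\<bar>}.
        integral {t..\<bar>real_of_int m\<bar>} (\<lambda>s. besselK (n + 1) s * besselI n t * s))"

end

theory Submission
  imports Defs "HOL-Complex_Analysis.Complex_Analysis" "HOL-Real_Asymp.Real_Asymp"
begin

text \<open>
  Put \<open>\<nu> = |n| + 1\<close> and \<open>R = \<surd>(s\<^sup>2 + \<nu>\<^sup>2)\<close>. Laplace's method at the saddle point
  \<open>b = arsinh (\<nu>/s)\<close> gives \<open>K\<^bsub>n+1\<^esub>(s) \<lesssim> exp (\<nu> b - R) / \<surd>R\<close>; shifting the contour of
  the Fourier integral defining \<open>I\<^sub>n(t)\<close> to height \<open>b\<close> and applying Laplace's method once more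
  gives \<open>|I\<^sub>n(t)| \<lesssim> exp (-|n| b + t cosh b) / \<surd>(1 + t cosh b)\<close>. With \<open>s cosh b = R\<close> the
  product is at most \<open>(\<surd>R/s) exp ((t - s) R/s) / \<surd>(1 + t R/s)\<close>, an exponential profile
  of width \<open>s/R\<close> in \<open>t\<close>. Integrating it in \<open>t \<in> [0, s]\<close> or in \<open>s \<in> [t, |m|]\<close> gives
  \<open>O (|m| / \<surd>(m\<^sup>2 + \<nu>\<^sup>2))\<close>, and division by \<open>|m|\<close> yields the claim.
\<close>

lemma cos_ge_one_minus_half_square: "1 - x^2/2 \<le> cos (x::real)"
proof -
  have "1 - y^2/2 \<le> cos y" if "0 \<le> y" for y :: real
  proof -
    have "cos 0 - 1 + 0^2/2 \<le> cos y - 1 + y^2/2"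
    proof (rule DERIV_nonneg_imp_nondecreasing[OF \<open>0 \<le> y\<close>])
      fix u :: real assume "0 \<le> u"
      then show "\<exists>D. ((\<lambda>x. cos x - 1 + x^2/2) has_real_derivative D) (at u) \<and> 0 \<le> D"
        using sin_x_le_x by (intro exI[of _ "u - sin u"]) (auto intro!: derivative_eq_intros)
    qed
    then show ?thesis by simp
  qed
  from this[of "\<bar>x\<bar>"] show ?thesis by simp
qed

lemma sin_ge_cubic: "0 \<le> x \<Longrightarrow> x - x^3/6 \<le> sin (x::real)"
proof -
  assume "0 \<le> x"
  have "sin 0 - 0 + 0^3/6 \<le> sin x - x + x^3/6"
  proof (rule DERIV_nonneg_imp_nondecreasing[OF \<open>0 \<le> x\<close>])
    fix u :: real
    show "\<exists>D. ((\<lambda>x. sin x - x + x^3/6) has_real_derivative D) (at u) \<and> 0 \<le> D"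
      using cos_ge_one_minus_half_square[of u]
      by (intro exI[of _ "cos u - 1 + u^2/2"])
         (auto intro!: derivative_eq_intros simp: power2_eq_square power3_eq_cube)
  qed
  then show ?thesis by simp
qed

text \<open>Via \<open>1 + cos (2\<pi>x) = 2 sin\<^sup>2 y\<close> with \<open>y = \<pi>|x - 1/2| \<le> 2\<close>, where \<open>sin y \<ge> y/3\<close>.\<close>
lemma one_plus_cos_2pi_ge:
  fixes x :: real assumes "0 \<le> x" "x \<le> 1"
  shows "2 * (x - 1/2)^2 \<le> 1 + cos (2*pi*x)"
proof -
  define y where "y = pi * \<bar>x - 1/2\<bar>"
  have "\<bar>x - 1/2\<bar> \<le> 1/2" using assms by linarith
  then have "y \<le> pi * (1/2)" unfolding y_def by (intro mult_left_mono) auto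
  moreover have "0 \<le> y" by (simp add: y_def)
  ultimately have y: "0 \<le> y" "y \<le> 2" using pi_less_4 by linarith+
  have "y^2 \<le> 2^2" using y by (intro power_mono) auto
  then have "y * y^2 \<le> y * 2^2" using y by (intro mult_left_mono)
  then have "y^3 \<le> y * 2^2" by (simp add: power3_eq_cube power2_eq_square)
  then have "y/3 \<le> sin y" using sin_ge_cubic[of y] y by simp
  then have "(y/3)^2 \<le> (sin y)^2" using y by (intro power_mono) auto
  moreover have "(x - 1/2)^2 \<le> (y/3)^2"
  proof -
    have "1 \<le> (pi/3)^2" using pi_gt3 power_mono[of 1 "pi/3" 2] by simp
    then have "1 * (x - 1/2)^2 \<le> (pi/3)^2 * (x - 1/2)^2" by (intro mult_right_mono) auto
    also have "\<dots> = (y/3)^2" by (simp add: y_def power_mult_distrib power_divide)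
    finally show ?thesis by simp
  qed
  moreover have "1 + cos (2*pi*x) = 2 * (sin y)^2"
  proof -
    have "2*y = \<bar>2*pi*x - pi\<bar>"
      using abs_mult[of "2*pi" "x - 1/2"] by (simp add: y_def algebra_simps)
    then have "cos (2*y) = cos (2*pi*x - pi)" by simp
    then show ?thesis by (simp add: cos_diff cos_double_sin)
  qed
  ultimately show ?thesis by linarith
qed

lemma exp_minus_one_minus_ge: "x^2 / (2 + \<bar>x\<bar>) \<le> exp x - 1 - (x::real)"
proof (cases "0 \<le> x")
  case True
  have "x^2 / (2 + \<bar>x\<bar>) \<le> x^2 / 2" using True by (intro divide_left_mono) auto
  then show ?thesis using exp_lower_Taylor_quadratic[OF True] by linarith
next
  case False
  define y where "y = - x"
  have y: "0 \<le> y" using False by (simp add: y_def)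
  have "(2 + 0) * exp (- 0) - 2 + 0 \<le> (2 + y) * exp (- y) - 2 + y"
  proof (rule DERIV_nonneg_imp_nondecreasing[OF y])
    fix u :: real
    have "(1 + u) * exp (- u) \<le> 1"
      using exp_ge_add_one_self[of u] by (simp add: exp_minus field_simps)
    then show "\<exists>D. ((\<lambda>y. (2 + y) * exp (- y) - 2 + y) has_real_derivative D) (at u) \<and> 0 \<le> D"
      by (intro exI[of _ "1 - (1 + u) * exp (- u)"]) (auto intro!: derivative_eq_intros simp: algebra_simps)
  qed
  then have "(2 - y) / (2 + y) \<le> exp (- y)" using y by (simp add: divide_le_eq mult.commute)
  moreover have "(2 - y) / (2 + y) - 1 + y = y^2 / (2 + y)"
    using y by (simp add: field_simps power2_eq_square)
  ultimately show ?thesis using y by (simp add: y_def)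
qed

lemma linear_le_half_square_mult_ratio:
  fixes x k :: real assumes "0 \<le> x" "1 \<le> k"
  shows "k*x/4 - 1/8 \<le> (k^2/2) * (x^2 / (2 + x))"
proof (cases "x \<le> 2")
  case True
  have "x^2/4 \<le> x^2/(2+x)" using assms True by (intro divide_left_mono) auto
  then have "(k^2/2) * (x^2/4) \<le> (k^2/2) * (x^2/(2+x))" by (intro mult_left_mono) auto
  moreover have "k*x/4 - 1/8 \<le> (k^2/2) * (x^2/4)"
    using sum_squares_ge_zero[of "k*x - 1" 0] by (simp add: power2_eq_square algebra_simps)
  ultimately show ?thesis by linarith
next
  case False
  have "x/2 \<le> x^2/(2+x)" using False by (simp add: field_simps power2_eq_square)
  then have "(k^2/2) * (x/2) \<le> (k^2/2) * (x^2/(2+x))" by (intro mult_left_mono) auto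
  moreover have "k*x \<le> k^2 * x" using assms by (intro mult_right_mono) (auto simp: power2_eq_square)
  ultimately show ?thesis by simp
qed

lemma cosh_le_exp_abs: "cosh (x::real) \<le> exp \<bar>x\<bar>"
  by (cases "0 \<le> x") (simp_all add: cosh_def)

lemma sqrt_le_exp_quarter: "0 \<le> x \<Longrightarrow> sqrt x \<le> exp (x/4)"
proof -
  assume "0 \<le> x"
  have "x \<le> (1 + x/4)^2" using sum_squares_ge_zero[of "1 - x/4" 0] by (simp add: power2_eq_square algebra_simps)
  then have "sqrt x \<le> 1 + x/4" using \<open>0 \<le> x\<close> by (simp add: real_le_lsqrt)
  also have "\<dots> \<le> exp (x/4)" by (rule exp_ge_add_one_self)
  finally show ?thesis .
qed

lemma exp_neg_le_inverse_one_plus: "0 \<le> x \<Longrightarrow> exp (- x) \<le> 1 / (1 + (x::real))"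
  using exp_ge_add_one_self[of x] by (simp add: exp_minus inverse_eq_divide divide_left_mono)

lemma divide_sqrt_add_square_mono:
  fixes s M \<nu> :: real assumes "0 \<le> s" "s \<le> M" "0 < \<nu>"
  shows "s / sqrt (s^2 + \<nu>^2) \<le> M / sqrt (M^2 + \<nu>^2)"
proof -
  have "s^2 \<le> M^2" using assms by (intro power_mono) auto
  then have "s^2 * (M^2 + \<nu>^2) \<le> M^2 * (s^2 + \<nu>^2)"
    using mult_right_mono[of "s^2" "M^2" "\<nu>^2"] by (simp add: algebra_simps)
  then have "sqrt (s^2 * (M^2 + \<nu>^2)) \<le> sqrt (M^2 * (s^2 + \<nu>^2))" by (rule real_sqrt_le_mono)
  then have "s * sqrt (M^2 + \<nu>^2) \<le> M * sqrt (s^2 + \<nu>^2)" using assms by (simp add: real_sqrt_mult)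
  moreover have "0 < sqrt (s^2 + \<nu>^2)" "0 < sqrt (M^2 + \<nu>^2)" using assms by (simp_all add: add_nonneg_pos)
  ultimately show ?thesis by (simp add: divide_simps mult.commute)
qed

lemma exp_neg_eighth_diff_le:
  fixes t M \<nu> :: real assumes "0 \<le> t" "t \<le> M" "1 \<le> \<nu>"
  shows "exp (- (t + \<nu>) / 8) - exp (- (M + \<nu>) / 8) \<le> 2 * M / (M + \<nu>)"
proof -
  have "exp (- (t + \<nu>) / 8) \<le> exp (- \<nu> / 8)" using assms by simp
  moreover have "exp (- (M + \<nu>) / 8) = exp (- \<nu> / 8) * exp (- M / 8)"
    by (simp add: mult_exp_exp add_divide_distrib)
  ultimately have "exp (- (t + \<nu>) / 8) - exp (- (M + \<nu>) / 8) \<le> exp (- \<nu> / 8) * (1 - exp (- M / 8))"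
    by (simp add: right_diff_distrib)
  also have "\<dots> \<le> min 1 (M / (8 + \<nu>))"
  proof -
    have "exp (- \<nu> / 8) \<le> 8 / (8 + \<nu>)"
      using exp_neg_le_inverse_one_plus[of "\<nu> / 8"] assms by (simp add: field_simps)
    moreover have "1 - exp (- M / 8) \<le> M / 8" using exp_ge_add_one_self[of "- M / 8"] by simp
    moreover have "exp (- \<nu> / 8) \<le> 1" "1 - exp (- M / 8) \<le> 1" "0 \<le> 1 - exp (- M / 8)" using assms by auto
    ultimately have "exp (- \<nu> / 8) * (1 - exp (- M / 8)) \<le> 8 / (8 + \<nu>) * (M / 8)"
      and "exp (- \<nu> / 8) * (1 - exp (- M / 8)) \<le> 1 * 1"
      by (intro mult_mono; simp)+
    moreover have "8 / (8 + \<nu>) * (M / 8) = M / (8 + \<nu>)" using assms by (simp add: field_simps)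
    ultimately show ?thesis by (simp only: min.bounded_iff mult_1)
  qed
  also have "\<dots> \<le> 2 * M / (M + \<nu>)"
  proof (cases "M \<le> \<nu>")
    case True
    then have "M * M \<le> M * \<nu>" using assms by (intro mult_left_mono) auto
    then show ?thesis using assms by (simp add: field_simps min_le_iff_disj)
  next
    case False
    then show ?thesis using assms by (simp add: field_simps min_le_iff_disj)
  qed
  finally show ?thesis .
qed

text \<open>The hypothesis \<open>0 \<le> G\<close> covers a non-integrable \<open>f\<close>, whose \<open>integral\<close> is \<open>0\<close>.\<close>
lemma integral_le_has_integral:
  fixes f g :: "real \<Rightarrow> real"
  assumes "(g has_integral G) S" "\<And>x. x \<in> S \<Longrightarrow> f x \<le> g x" "0 \<le> G"
  shows "integral S f \<le> G"
proof (cases "f integrable_on S")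
  case True
  then show ?thesis using assms has_integral_le has_integral_integral by blast
next
  case False
  then show ?thesis using assms(3) by (simp add: not_integrable_integral)
qed

lemma has_integral_exp_affine:
  fixes a b c d :: real assumes c: "c \<noteq> 0" and ab: "a \<le> b"
  shows "((\<lambda>x. exp (c * x + d)) has_integral (exp (c * b + d) - exp (c * a + d)) / c) {a..b}"
proof -
  have "((\<lambda>x. exp (c * x + d) / c) has_real_derivative exp (c * x + d)) (at x)" for x
    using c by (auto intro!: derivative_eq_intros)
  then have "((\<lambda>x. exp (c * x + d)) has_integral exp (c * b + d) / c - exp (c * a + d) / c) {a..b}"
    using ab by (intro fundamental_theorem_of_calculus)
       (auto simp flip: has_real_derivative_iff_has_vector_derivative intro: has_field_derivative_at_within)
  then show ?thesis by (simp add: diff_divide_distrib)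
qed

lemma has_integral_inverse_cosh:
  fixes k c :: real assumes "0 < k"
  shows "((\<lambda>a. 1 / cosh (k * (a - c))) has_integral (pi/2 + arctan (sinh (k * c))) / k) {0..}"
proof (rule has_integral_to_inf)
  define F where "F a = arctan (sinh (k * (a - c))) / k" for a
  have F': "(F has_real_derivative 1 / cosh (k * (a - c))) (at a)" for a
  proof -
    have "(F has_real_derivative inverse (1 + (sinh (k * (a - c)))^2) * (cosh (k * (a - c)) * k) / k) (at a)"
      unfolding F_def by (auto intro!: derivative_eq_intros)
    moreover have "1 + (sinh (k * (a - c)))^2 = (cosh (k * (a - c)))^2" by (simp add: cosh_square_eq)
    ultimately show ?thesis using assms by (simp add: power2_eq_square divide_simps)
  qed
  show "(\<lambda>a. 1 / cosh (k * (a - c))) integrable_on {0..y}" for y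
    by (intro integrable_continuous_interval continuous_intros) simp
  show "0 \<le> 1 / cosh (k * (y - c))" for y by simp
  have "((\<lambda>y. F y - F 0) \<longlongrightarrow> (pi/2 + arctan (sinh (k * c))) / k) at_top"
  proof -
    have "filterlim (\<lambda>y. k * (y - c)) at_top at_top" using assms by real_asymp
    then have "((\<lambda>y. arctan (sinh (k * (y - c)))) \<longlongrightarrow> pi/2) at_top"
      using filterlim_compose[OF tendsto_arctan_at_top filterlim_compose[OF sinh_real_at_top]] by blast
    then have "((\<lambda>y. F y - F 0) \<longlongrightarrow> pi/2 / k - F 0) at_top"
      unfolding F_def using assms by (intro tendsto_intros) auto
    then show ?thesis by (simp add: F_def add_divide_distrib arctan_minus)
  qed
  moreover have "\<forall>\<^sub>F y in at_top. F y - F 0 = integral {0..y} (\<lambda>a. 1 / cosh (k * (a - c)))"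
  proof (rule eventually_at_top_linorderI)
    fix y :: real assume "0 \<le> y"
    with F' show "F y - F 0 = integral {0..y} (\<lambda>a. 1 / cosh (k * (a - c)))"
      by (intro integral_unique[symmetric] fundamental_theorem_of_calculus)
         (auto simp flip: has_real_derivative_iff_has_vector_derivative intro: has_field_derivative_at_within)
  qed
  ultimately show "((\<lambda>y. integral {0..y} (\<lambda>a. 1 / cosh (k * (a - c)))) \<longlongrightarrow> (pi/2 + arctan (sinh (k * c))) / k) at_top"
    by (rule Lim_transform_eventually)
qed

lemma has_integral_inverse_one_plus_square:
  fixes k :: real assumes k: "0 < k"
  shows "((\<lambda>x. 1 / (1 + k * (x - 1/2)^2)) has_integral 2 * arctan (sqrt k / 2) / sqrt k) {0..1}"
proof -
  define F where "F x = arctan (sqrt k * (x - 1/2)) / sqrt k" for x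
  have "(F has_real_derivative 1 / (1 + k * (x - 1/2)^2)) (at x)" for x
  proof -
    have "(F has_real_derivative inverse (1 + (sqrt k * (x - 1/2))^2)) (at x)"
      unfolding F_def using k by (auto intro!: derivative_eq_intros simp: mult.assoc)
    moreover have "(sqrt k * (x - 1/2))^2 = k * (x - 1/2)^2" using k by (simp add: power_mult_distrib)
    ultimately show ?thesis using k by (simp add: inverse_eq_divide)
  qed
  then have "((\<lambda>x. 1 / (1 + k * (x - 1/2)^2)) has_integral F 1 - F 0) {0..1}"
    by (intro fundamental_theorem_of_calculus)
       (auto simp flip: has_real_derivative_iff_has_vector_derivative intro: has_field_derivative_at_within)
  moreover have "F 1 - F 0 = 2 * arctan (sqrt k / 2) / sqrt k"
    by (simp add: F_def arctan_minus diff_divide_distrib)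
  ultimately show ?thesis by simp
qed

section \<open>The modified Bessel function of the second kind\<close>

lemma cosh_arsinh_divide:
  fixes s \<nu> :: real assumes "0 < s"
  shows "s * cosh (arsinh (\<nu> / s)) = sqrt (s^2 + \<nu>^2)"
proof -
  have "s * sqrt ((\<nu>/s)^2 + 1) = sqrt (s^2 * ((\<nu>/s)^2 + 1))"
    using assms by (simp add: real_sqrt_mult)
  also have "s^2 * ((\<nu>/s)^2 + 1) = s^2 + \<nu>^2" using assms by (simp add: field_simps)
  finally show ?thesis by (simp add: cosh_arsinh_real)
qed

text \<open>The saddle point of \<open>a \<mapsto> \<nu> a - s cosh a\<close> is \<open>b = arsinh (\<nu>/s)\<close>, where the exponent equals
  \<open>\<nu> b - R\<close>; away from it the exponent decays linearly at rate \<open>\<surd>R/4\<close>.\<close>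
lemma saddle_point_exponent_bound:
  fixes s \<nu> a :: real
  assumes s: "0 < s" and \<nu>: "1 \<le> \<nu>"
  defines "R \<equiv> sqrt (s^2 + \<nu>^2)" and "b \<equiv> arsinh (\<nu> / s)"
  shows "\<nu> * a - s * cosh a \<le> \<nu> * b - R + 1/8 - sqrt R / 4 * \<bar>a - b\<bar>"
proof -
  have R\<nu>: "\<nu> \<le> R" unfolding R_def by (rule real_le_rsqrt) simp
  have sinh_b: "s * sinh b = \<nu>" using s by (simp add: b_def)
  have cosh_b: "s * cosh b = R" using cosh_arsinh_divide[OF s] by (simp add: b_def R_def)
  define d where "d = a - b"
  have "s * cosh a = R * cosh d + \<nu> * sinh d"
    using cosh_add[of b d] by (simp add: d_def algebra_simps flip: sinh_b cosh_b)
  then have gap: "s * cosh a - \<nu> * a - (R - \<nu> * b)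
      = ((R + \<nu>) * (exp d - 1 - d) + (R - \<nu>) * (exp (-d) - 1 + d)) / 2"
    by (simp add: d_def cosh_field_def sinh_field_def algebra_simps add_divide_distrib diff_divide_distrib)
  define q where "q = \<bar>d\<bar>^2 / (2 + \<bar>d\<bar>)"
  have "R * q \<le> (R + \<nu>) * (exp d - 1 - d)"
    using exp_minus_one_minus_ge[of d] R\<nu> \<nu> by (intro mult_mono) (auto simp: q_def)
  moreover have "0 \<le> (R - \<nu>) * (exp (-d) - 1 + d)"
    using R\<nu> exp_ge_add_one_self[of "-d"] by simp
  moreover have "sqrt R / 4 * \<bar>d\<bar> - 1/8 \<le> R * q / 2"
    using linear_le_half_square_mult_ratio[of "\<bar>d\<bar>" "sqrt R"] R\<nu> \<nu> by (simp add: q_def mult.commute)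
  ultimately show ?thesis using gap by (simp add: d_def)
qed

lemma besselK_le:
  fixes s \<nu> :: real
  assumes s: "0 < s" and \<nu>: "1 \<le> \<nu>" and m: "\<bar>real_of_int m\<bar> \<le> \<nu>"
  defines "R \<equiv> sqrt (s^2 + \<nu>^2)" and "b \<equiv> arsinh (\<nu> / s)"
  shows "besselK m s \<le> 4 * pi * exp (1/8) * exp (\<nu> * b - R) / sqrt R"
proof -
  have "\<nu> \<le> R" unfolding R_def by (rule real_le_rsqrt) simp
  then have R1: "1 \<le> R" using \<nu> by simp
  define k where "k = sqrt R / 4"
  have k: "0 < k" using R1 by (simp add: k_def)
  define C where "C = exp (\<nu> * b - R + 1/8)"
  have "exp (- s * cosh a) * cosh (real_of_int m * a) \<le> C * (1 / cosh (k * (a - b)))"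
    if "a \<in> {0..}" for a
  proof -
    have "cosh (real_of_int m * a) \<le> exp (\<bar>real_of_int m\<bar> * a)"
      using cosh_le_exp_abs[of "real_of_int m * a"] that by (simp add: abs_mult)
    also have "\<dots> \<le> exp (\<nu> * a)" using m that by (simp add: mult_right_mono)
    finally have "exp (- s * cosh a) * cosh (real_of_int m * a) \<le> exp (- s * cosh a) * exp (\<nu> * a)"
      by simp
    also have "\<dots> = exp (\<nu> * a - s * cosh a)" by (simp add: exp_diff exp_minus field_simps)
    also have "\<dots> \<le> exp (\<nu> * b - R + 1/8 - \<bar>k * (a - b)\<bar>)"
      using saddle_point_exponent_bound[OF s \<nu>, of a] R1
      by (simp add: R_def b_def k_def abs_mult)
    also have "\<dots> = C * (1 / exp \<bar>k * (a - b)\<bar>)" by (simp add: C_def exp_diff)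
    also have "\<dots> \<le> C * (1 / cosh (k * (a - b)))"
      by (intro mult_left_mono divide_left_mono cosh_le_exp_abs) (auto simp: C_def)
    finally show ?thesis .
  qed
  moreover have "((\<lambda>a. C * (1 / cosh (k * (a - b)))) has_integral C * ((pi/2 + arctan (sinh (k * b))) / k)) {0..}"
    by (intro has_integral_mult_right has_integral_inverse_cosh k)
  moreover have "0 \<le> C * ((pi/2 + arctan (sinh (k * b))) / k)"
    using k arctan_lbound[of "sinh (k * b)"] by (simp add: C_def)
  ultimately have "besselK m s \<le> C * ((pi/2 + arctan (sinh (k * b))) / k)"
    unfolding besselK_def by (intro integral_le_has_integral)
  also have "\<dots> \<le> C * (pi / k)"
    using k arctan_ubound[of "sinh (k * b)"] by (intro mult_left_mono divide_right_mono) (auto simp: C_def)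
  also have "\<dots> = 4 * pi * exp (1/8) * exp (\<nu> * b - R) / sqrt R"
    by (simp add: C_def k_def exp_add)
  finally show ?thesis .
qed

section \<open>The modified Bessel function of the first kind\<close>

lemma contour_integral_periodic_shift:
  fixes f :: "complex \<Rightarrow> complex" and p b :: real
  assumes holo: "f holomorphic_on UNIV" and periodic: "\<And>w. f (w + of_real p) = f w"
  shows "contour_integral (linepath z (z + of_real p)) f =
         contour_integral (linepath (z + \<i> * of_real b) (z + of_real p + \<i> * of_real b)) f"
proof -
  define w1 w2 w3 w4 where "w1 = z" and "w2 = z + of_real p"
    and "w3 = z + of_real p + \<i> * of_real b" and "w4 = z + \<i> * of_real b"
  let ?I = "\<lambda>u v. contour_integral (linepath u v) f"
  have "f contour_integrable_on linepath u v" for u v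
    by (intro contour_integrable_continuous_linepath holomorphic_on_imp_continuous_on
        holomorphic_on_subset[OF holo]) auto
  then have "(f has_contour_integral ?I w1 w2 + (?I w2 w3 + (?I w3 w4 + ?I w4 w1)))
              (linepath w1 w2 +++ (linepath w2 w3 +++ (linepath w3 w4 +++ linepath w4 w1)))"
    by (intro has_contour_integral_join has_contour_integral_integral valid_path_join) auto
  moreover have "(f has_contour_integral 0)
              (linepath w1 w2 +++ (linepath w2 w3 +++ (linepath w3 w4 +++ linepath w4 w1)))"
    by (rule Cauchy_theorem_convex_simple[OF holo convex_UNIV]) (auto intro!: valid_path_join)
  ultimately have "?I w1 w2 + (?I w2 w3 + (?I w3 w4 + ?I w4 w1)) = 0"
    using has_contour_integral_unique by blast
  moreover have "?I w2 w3 = ?I w1 w4"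
  proof -
    have "linepath w2 w3 x = linepath w1 w4 x + of_real p" for x
      by (simp add: linepath_def w1_def w2_def w3_def w4_def algebra_simps scaleR_conv_of_real)
    moreover have "w3 - w2 = w4 - w1" by (simp add: w1_def w2_def w3_def w4_def)
    ultimately show ?thesis by (simp add: contour_integral_integral periodic)
  qed
  moreover have "?I w4 w1 = - ?I w1 w4" "?I w3 w4 = - ?I w4 w3"
    using contour_integral_reversepath[of "linepath w1 w4" f]
          contour_integral_reversepath[of "linepath w4 w3" f] by simp_all
  ultimately show ?thesis by (simp add: w1_def w2_def w3_def w4_def algebra_simps)
qed

definition bessel_kernel :: "real \<Rightarrow> nat \<Rightarrow> complex \<Rightarrow> complex" where
  "bessel_kernel t N w = exp (of_real t * cos w + \<i> * of_nat N * w)"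

lemma bessel_kernel_holomorphic: "bessel_kernel t N holomorphic_on S"
  unfolding bessel_kernel_def by (intro holomorphic_intros)

lemma bessel_kernel_periodic: "bessel_kernel t N (w + of_real (2 * pi)) = bessel_kernel t N w"
proof -
  have "cos (w + of_real (2 * pi)) = cos w"
    by (simp add: cos_add flip: cos_of_real sin_of_real)
  then show ?thesis by (simp add: bessel_kernel_def algebra_simps exp_add)
qed

lemma Re_bessel_kernel_of_real: "Re (bessel_kernel t N (of_real x)) = exp (t * cos x) * cos (real N * x)"
proof -
  have "of_real t * cos (of_real x) + \<i> * of_nat N * of_real x = Complex (t * cos x) (real N * x)"
    by (simp add: cos_of_real complex_eq_iff)
  then show ?thesis by (simp add: bessel_kernel_def Re_exp)
qed

lemma norm_bessel_kernel:
  "norm (bessel_kernel t N (of_real u + \<i> * of_real b)) = exp (t * cos u * cosh b - real N * b)"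
  by (simp add: bessel_kernel_def norm_exp_eq_Re Re_cos cosh_def)

lemma integral_even_symmetric:
  fixes f :: "real \<Rightarrow> real"
  assumes "continuous_on {-a..a} f" "\<And>x. f (-x) = f x" "0 \<le> a"
  shows "integral {-a..a} f = 2 * integral {0..a} f"
proof -
  have "integral {-a..0} f + integral {0..a} f = integral {-a..a} f"
    using assms by (intro Henstock_Kurzweil_Integration.integral_combine integrable_continuous_interval) auto
  moreover have "integral {-a..-0} (\<lambda>x. f (-x)) = integral {0..a} f"
    by (rule Henstock_Kurzweil_Integration.integral_reflect_real)
  ultimately show ?thesis using assms(2) by simp
qed

lemma besselI_eq_Re_contour_integral:
  "besselI n t = Re (contour_integral (linepath (- of_real pi) (of_real pi)) (bessel_kernel t (nat \<bar>n\<bar>))) / (2 * pi)"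
proof -
  define N where "N = nat \<bar>n\<bar>"
  define F where "F = (\<lambda>x. exp (t * cos x) * cos (real N * x))"
  have "cos (real_of_int n * x) = cos (real N * x)" for x
    by (cases "0 \<le> n") (simp_all add: N_def)
  then have "besselI n t = (1/pi) * integral {0..pi} F"
    by (simp add: besselI_def F_def)
  also have "integral {0..pi} F = integral {-pi..pi} F / 2"
    by (subst integral_even_symmetric) (auto simp: F_def intro!: continuous_intros)
  also have "integral {-pi..pi} F = integral {-pi..pi} (Re \<circ> (\<lambda>x. bessel_kernel t N (of_real x)))"
    by (simp add: F_def o_def Re_bessel_kernel_of_real)
  also have "\<dots> = Re (integral {-pi..pi} (\<lambda>x. bessel_kernel t N (of_real x)))"
    by (intro integral_linear bounded_linear_Re integrable_continuous_interval
        continuous_on_compose2[OF holomorphic_on_imp_continuous_on[OF bessel_kernel_holomorphic]])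
       (auto intro!: continuous_intros)
  finally show ?thesis by (simp add: N_def contour_integral_linepath_Reals_eq)
qed

lemma norm_contour_integral_bessel_kernel_le:
  fixes t b :: real and N :: nat
  defines "J \<equiv> contour_integral (linepath (- of_real pi + \<i> * of_real b) (of_real pi + \<i> * of_real b))
                 (bessel_kernel t N)"
  shows "norm J \<le> 2 * pi * exp (- real N * b) * integral {0..1} (\<lambda>x. exp (- t * cosh b * cos (2*pi*x)))"
proof -
  define u where "u = linepath (- of_real pi + \<i> * of_real b) (of_real pi + \<i> * of_real b)"
  have u: "u x = of_real (2*pi*x - pi) + \<i> * of_real b" for x
    by (simp add: u_def linepath_def algebra_simps scaleR_conv_of_real)
  have "(bessel_kernel t N has_contour_integral J) u"
    unfolding u_def J_def by (intro has_contour_integral_integral contour_integrable_continuous_linepath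
        holomorphic_on_imp_continuous_on bessel_kernel_holomorphic)
  then have J: "((\<lambda>x. bessel_kernel t N (u x) * of_real (2 * pi)) has_integral J) {0..1}"
    by (simp add: u_def has_contour_integral_linepath)
  have norm_g: "norm (bessel_kernel t N (u x) * of_real (2 * pi))
        = 2 * pi * exp (- real N * b) * exp (- t * cosh b * cos (2*pi*x))" for x
  proof -
    have "norm (bessel_kernel t N (u x)) = exp (t * cos (2*pi*x - pi) * cosh b - real N * b)"
      by (simp only: u norm_bessel_kernel)
    then show ?thesis by (simp add: norm_mult cos_diff exp_diff exp_minus field_simps)
  qed
  have "norm J = norm (integral {0..1} (\<lambda>x. bessel_kernel t N (u x) * of_real (2 * pi)))"
    by (simp only: integral_unique[OF J])
  also have "\<dots> \<le> integral {0..1} (\<lambda>x. 2 * pi * exp (- real N * b) * exp (- t * cosh b * cos (2*pi*x)))"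
  proof (rule integral_norm_bound_integral)
    show "(\<lambda>x. bessel_kernel t N (u x) * of_real (2 * pi)) integrable_on {0..1}"
      using J by (rule has_integral_integrable)
    show "(\<lambda>x. 2 * pi * exp (- real N * b) * exp (- t * cosh b * cos (2*pi*x))) integrable_on {0..1}"
      by (intro integrable_continuous_interval continuous_intros)
  qed (simp only: norm_g order.refl)
  finally show ?thesis by simp
qed

text \<open>Shifting the contour of the Fourier integral of \<open>exp (t cos w)\<close> by \<open>i b\<close> trades the
  oscillation \<open>cos (n w)\<close> for the decay factor \<open>exp (-|n| b)\<close>.\<close>
lemma abs_besselI_le:
  fixes t b :: real
  shows "\<bar>besselI n t\<bar> \<le> exp (- \<bar>real_of_int n\<bar> * b) * integral {0..1} (\<lambda>x. exp (- t * cosh b * cos (2*pi*x)))"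
proof -
  define N where "N = nat \<bar>n\<bar>"
  let ?J = "contour_integral (linepath (- of_real pi + \<i> * of_real b) (of_real pi + \<i> * of_real b))
              (bessel_kernel t N)"
  have "contour_integral (linepath (- of_real pi) (of_real pi)) (bessel_kernel t N) = ?J"
    using contour_integral_periodic_shift[where f = "bessel_kernel t N" and p = "2 * pi"
            and z = "- of_real pi" and b = b, OF bessel_kernel_holomorphic bessel_kernel_periodic]
    by simp
  then have "\<bar>besselI n t\<bar> = \<bar>Re ?J\<bar> / (2 * pi)"
    by (simp add: besselI_eq_Re_contour_integral N_def abs_divide)
  also have "\<dots> \<le> norm ?J / (2 * pi)"
    by (intro divide_right_mono abs_Re_le_cmod) simp
  also have "\<dots> \<le> exp (- real N * b) * integral {0..1} (\<lambda>x. exp (- t * cosh b * cos (2*pi*x)))"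
    using norm_contour_integral_bessel_kernel_le[of b t N] by (simp add: pos_divide_le_eq mult.commute)
  finally show ?thesis by (simp add: N_def)
qed

lemma exp_neg_cos_2pi_le:
  fixes X x :: real assumes X: "0 \<le> X" and x: "0 \<le> x" "x \<le> 1"
  shows "exp (- X * cos (2*pi*x)) \<le> exp X * (3/2) * (1 / (1 + 2 * (1 + X) * (x - 1/2)^2))"
proof -
  define z where "z = (x - 1/2)^2"
  have "1/4 - z = x * (1 - x)" by (simp add: z_def power2_eq_square algebra_simps)
  moreover have "0 \<le> x * (1 - x)" using x by simp
  ultimately have z: "0 \<le> z" "z \<le> 1/4" by (simp_all add: z_def)
  have "exp (- X * cos (2*pi*x)) = exp X * exp (- (X * (1 + cos (2*pi*x))))"
    by (simp add: algebra_simps flip: exp_add)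
  also have "\<dots> \<le> exp X * exp (- (2 * X * z))"
  proof -
    have "X * (2 * z) \<le> X * (1 + cos (2*pi*x))"
      using one_plus_cos_2pi_ge[OF x] X by (intro mult_left_mono) (auto simp: z_def)
    then show ?thesis by simp
  qed
  also have "\<dots> \<le> exp X * (1 / (1 + 2 * X * z))"
    using exp_neg_le_inverse_one_plus[of "2 * X * z"] X z by (intro mult_left_mono) simp_all
  also have "\<dots> \<le> exp X * ((3/2) * (1 / (1 + 2 * (1 + X) * z)))"
  proof -
    have "1 + 2 * (1 + X) * z \<le> (3/2) * (1 + 2 * X * z)"
      using z mult_nonneg_nonneg[OF X z(1)] by (simp add: algebra_simps)
    moreover have "0 < 1 + 2 * X * z" "0 < 1 + 2 * (1 + X) * z" using z X by (simp_all add: add_pos_nonneg)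
    ultimately have "1 / (1 + 2 * X * z) \<le> (3/2) * (1 / (1 + 2 * (1 + X) * z))" by (simp add: field_simps)
    then show ?thesis by (intro mult_left_mono) auto
  qed
  finally show ?thesis by (simp add: z_def)
qed

text \<open>Laplace's method at the maximum \<open>x = 1/2\<close>, with a Cauchy rather than a Gaussian majorant.\<close>
lemma integral_exp_neg_cos_le:
  fixes X :: real assumes X: "0 \<le> X"
  shows "integral {0..1} (\<lambda>x. exp (- X * cos (2*pi*x))) \<le> 5 * exp X / sqrt (1 + X)"
proof -
  define k where "k = 2 * (1 + X)"
  have k: "0 < k" using X by (simp add: k_def)
  define G where "G = exp X * (3/2) * (2 * arctan (sqrt k / 2) / sqrt k)"
  have "((\<lambda>x. exp X * (3/2) * (1 / (1 + k * (x - 1/2)^2))) has_integral G) {0..1}"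
    unfolding G_def by (intro has_integral_mult_right has_integral_inverse_one_plus_square k)
  moreover have "0 \<le> G" using k arctan_less_iff[of 0 "sqrt k / 2"] by (simp add: G_def)
  ultimately have "integral {0..1} (\<lambda>x. exp (- X * cos (2*pi*x))) \<le> G"
    using exp_neg_cos_2pi_le[OF X] by (intro integral_le_has_integral) (auto simp: k_def)
  also have "G \<le> exp X * (3/2) * (pi / sqrt k)"
  proof -
    have "2 * arctan (sqrt k / 2) / sqrt k \<le> pi / sqrt k"
      using k arctan_ubound[of "sqrt k / 2"] by (intro divide_right_mono) auto
    then show ?thesis unfolding G_def by (intro mult_left_mono) auto
  qed
  also have "\<dots> = exp X * (3/2 * pi / sqrt 2) / sqrt (1 + X)"
  proof -
    have "sqrt k = sqrt 2 * sqrt (1 + X)" by (simp add: k_def flip: real_sqrt_mult)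
    then show ?thesis by simp
  qed
  also have "\<dots> \<le> 5 * exp X / sqrt (1 + X)"
  proof -
    have "7/5 \<le> sqrt 2" by (rule real_le_rsqrt) (simp add: power2_eq_square)
    then have "3/2 * pi / sqrt 2 \<le> 3/2 * 4 / (7/5)"
      using pi_less_4 by (intro frac_le) auto
    then have "exp X * (3/2 * pi / sqrt 2) \<le> exp X * 5" by (intro mult_left_mono) simp_all
    then have "exp X * (3/2 * pi / sqrt 2) / sqrt (1 + X) \<le> exp X * 5 / sqrt (1 + X)"
      using X by (intro divide_right_mono) simp_all
    then show ?thesis by (simp only: mult.commute)
  qed
  finally show ?thesis .
qed

lemma abs_besselI_le_exp:
  fixes t b :: real assumes "0 \<le> t"
  shows "\<bar>besselI n t\<bar> \<le> 5 * exp (t * cosh b - \<bar>real_of_int n\<bar> * b) / sqrt (1 + t * cosh b)"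
proof -
  have X: "0 \<le> t * cosh b" using assms by simp
  have "\<bar>besselI n t\<bar> \<le> exp (- \<bar>real_of_int n\<bar> * b) * integral {0..1} (\<lambda>x. exp (- (t * cosh b) * cos (2*pi*x)))"
    using abs_besselI_le[of n t b] by simp
  also have "\<dots> \<le> exp (- \<bar>real_of_int n\<bar> * b) * (5 * exp (t * cosh b) / sqrt (1 + t * cosh b))"
    by (intro mult_left_mono integral_exp_neg_cos_le X) simp
  also have "\<dots> = 5 * exp (t * cosh b - \<bar>real_of_int n\<bar> * b) / sqrt (1 + t * cosh b)"
    by (simp add: exp_diff exp_minus field_simps)
  finally show ?thesis .
qed

definition bessel_const :: real where "bessel_const = 40 * pi * exp (1/8)"

lemma bessel_const_pos: "0 < bessel_const"
  by (simp add: bessel_const_def)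

lemma besselK_nonneg: "0 \<le> s \<Longrightarrow> 0 \<le> besselK m s"
  unfolding besselK_def
  by (cases "(\<lambda>\<alpha>. exp (- s * cosh \<alpha>) * cosh (real_of_int m * \<alpha>)) integrable_on {0..}")
     (simp_all add: integral_nonneg not_integrable_integral)

text \<open>Evaluating both bounds at the same \<open>b = arsinh (\<nu>/s)\<close> makes the exponents \<open>\<nu> b\<close> and
  \<open>-|n| b\<close> cancel up to a single factor \<open>exp b = (R + \<nu>)/s\<close>.\<close>
lemma besselK_mult_abs_besselI_le:
  fixes n :: int and s t \<nu> :: real
  assumes s: "0 < s" and t: "0 \<le> t" and \<nu>_def: "\<nu> = \<bar>real_of_int n\<bar> + 1"
  defines "R \<equiv> sqrt (s^2 + \<nu>^2)"
  shows "besselK (n + 1) s * \<bar>besselI n t\<bar>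
           \<le> bessel_const * (sqrt R / s) * exp ((t - s) * R / s) / sqrt (1 + t * R / s)"
proof -
  define b where "b = arsinh (\<nu> / s)"
  have \<nu>: "1 \<le> \<nu>" by (simp add: \<nu>_def)
  have R\<nu>: "\<nu> \<le> R" unfolding R_def by (rule real_le_rsqrt) simp
  have cosh_b: "s * cosh b = R" using cosh_arsinh_divide[OF s] by (simp add: b_def R_def)
  have exp_b: "exp b = (R + \<nu>) / s"
    using cosh_b s by (simp add: b_def field_simps flip: cosh_plus_sinh)
  define X where "X = t * R / s"
  have X: "0 \<le> X" "t * cosh b = X" using s t R\<nu> \<nu> cosh_b by (auto simp: X_def field_simps)
  have K: "besselK (n + 1) s \<le> 4 * pi * exp (1/8) * exp (\<nu> * b - R) / sqrt R"
    using besselK_le[OF s \<nu>, of "n + 1"] by (simp add: \<nu>_def R_def b_def)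
  have I: "\<bar>besselI n t\<bar> \<le> 5 * exp (X - \<bar>real_of_int n\<bar> * b) / sqrt (1 + X)"
    using abs_besselI_le_exp[OF t, of n b] X(2) by simp
  have exponents: "exp (\<nu> * b - R) * exp (X - \<bar>real_of_int n\<bar> * b) = exp b * exp ((t - s) * R / s)"
  proof -
    have "\<nu> * b - R + (X - \<bar>real_of_int n\<bar> * b) = b + (t - s) * R / s"
      using s by (simp add: \<nu>_def X_def field_simps)
    then show ?thesis by (simp only: mult_exp_exp)
  qed
  have "besselK (n + 1) s * \<bar>besselI n t\<bar>
        \<le> (4 * pi * exp (1/8) * exp (\<nu> * b - R) / sqrt R) * (5 * exp (X - \<bar>real_of_int n\<bar> * b) / sqrt (1 + X))"
    using K I besselK_nonneg[of s "n + 1"] s by (intro mult_mono) auto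
  also have "\<dots> = 20 * pi * exp (1/8) * (exp (\<nu> * b - R) * exp (X - \<bar>real_of_int n\<bar> * b))
                   / (sqrt R * sqrt (1 + X))"
    by simp
  also have "\<dots> = 20 * pi * exp (1/8) * (exp b * exp ((t - s) * R / s)) / (sqrt R * sqrt (1 + X))"
    unfolding exponents ..
  also have "\<dots> \<le> 20 * pi * exp (1/8) * ((2 * R / s) * exp ((t - s) * R / s)) / (sqrt R * sqrt (1 + X))"
    using exp_b R\<nu> \<nu> s X(1) by (intro divide_right_mono mult_right_mono mult_left_mono) (auto simp: divide_right_mono)
  also have "\<dots> = bessel_const * (sqrt R / s) * exp ((t - s) * R / s) / sqrt (1 + t * R / s)"
  proof -
    define r where "r = sqrt R"
    have "R = r^2" "0 < r" using R\<nu> \<nu> by (simp_all add: r_def)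
    then show ?thesis by (simp add: bessel_const_def X_def flip: r_def) (simp add: field_simps power2_eq_square)
  qed
  finally show ?thesis .
qed

lemma besselK_besselI_times_t_le:
  fixes n :: int and s t \<nu> :: real
  assumes t: "0 \<le> t" "t \<le> s" and s: "0 < s" and \<nu>: "\<nu> = \<bar>real_of_int n\<bar> + 1"
  defines "R \<equiv> sqrt (s^2 + \<nu>^2)"
  shows "besselK (n + 1) s * besselI n t * t \<le> bessel_const * exp ((t - s) * R / s)"
proof -
  have R: "0 \<le> R" by (simp add: R_def)
  define q where "q = sqrt (1 + t * R / s)"
  have q: "0 < q" using s t R by (simp add: q_def add_pos_nonneg)
  have "t * sqrt R \<le> s * q"
  proof (rule power2_le_imp_le)
    have "t * t \<le> s * t" using t by (intro mult_right_mono) auto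
    then have "t^2 * R \<le> s * t * R" using R by (intro mult_right_mono) (auto simp: power2_eq_square)
    moreover have "(t * sqrt R)^2 = t^2 * R" using R by (simp add: power_mult_distrib)
    moreover have "(s * q)^2 = s^2 * (1 + t * R / s)"
      using s t R by (simp add: q_def power_mult_distrib add_nonneg_nonneg)
    moreover have "s^2 * (1 + t * R / s) = s^2 + s * t * R" using s by (simp add: field_simps power2_eq_square)
    ultimately show "(t * sqrt R)^2 \<le> (s * q)^2" by (simp add: add_increasing)
  qed (use s q in simp)
  then have ratio: "sqrt R / s * t / q \<le> 1" using s q by (simp add: field_simps)
  have "besselK (n + 1) s * besselI n t * t \<le> besselK (n + 1) s * \<bar>besselI n t\<bar> * t"
    using t s besselK_nonneg[of s "n + 1"] by (intro mult_right_mono mult_left_mono) auto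
  also have "\<dots> \<le> bessel_const * (sqrt R / s) * exp ((t - s) * R / s) / q * t"
    using besselK_mult_abs_besselI_le[OF s t(1) \<nu>] t by (intro mult_right_mono) (auto simp: R_def q_def)
  also have "\<dots> = bessel_const * exp ((t - s) * R / s) * (sqrt R / s * t / q)" by simp
  also have "\<dots> \<le> bessel_const * exp ((t - s) * R / s)"
    using ratio bessel_const_pos by (intro mult_left_le) auto
  finally show ?thesis .
qed

lemma integral_besselK_besselI_dt_le:
  fixes n :: int and s M \<nu> :: real
  assumes s: "0 \<le> s" "s \<le> M" and \<nu>: "\<nu> = \<bar>real_of_int n\<bar> + 1"
  shows "integral {0..s} (\<lambda>t. besselK (n + 1) s * besselI n t * t) \<le> bessel_const * (M / sqrt (M^2 + \<nu>^2))"
proof (cases "s = 0")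
  case True
  then show ?thesis using s bessel_const_pos by simp
next
  case False
  then have s0: "0 < s" using s by simp
  define R where "R = sqrt (s^2 + \<nu>^2)"
  have R: "0 < R" using \<nu> by (simp add: R_def add_nonneg_pos)
  have "bessel_const * ((exp (R / s * s + - R) - exp (R / s * 0 + - R)) / (R / s))
        = bessel_const * (1 - exp (- R)) * (s / R)"
    using s0 R by (simp add: field_simps)
  moreover have "((\<lambda>t. bessel_const * exp (R / s * t + - R)) has_integral
          bessel_const * ((exp (R / s * s + - R) - exp (R / s * 0 + - R)) / (R / s))) {0..s}"
    using s0 R by (intro has_integral_mult_right has_integral_exp_affine) auto
  ultimately have "((\<lambda>t. bessel_const * exp (R / s * t + - R)) has_integral
          bessel_const * (1 - exp (- R)) * (s / R)) {0..s}"
    by (simp only:)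
  then have "integral {0..s} (\<lambda>t. besselK (n + 1) s * besselI n t * t) \<le> bessel_const * (1 - exp (- R)) * (s / R)"
  proof (rule integral_le_has_integral)
    fix t assume "t \<in> {0..s}"
    then have "besselK (n + 1) s * besselI n t * t \<le> bessel_const * exp ((t - s) * R / s)"
      using besselK_besselI_times_t_le[OF _ _ s0 \<nu>] by (simp add: R_def)
    moreover have "(t - s) * R / s = R / s * t + - R" using s0 by (simp add: field_simps)
    ultimately show "besselK (n + 1) s * besselI n t * t \<le> bessel_const * exp (R / s * t + - R)"
      by simp
  qed (use bessel_const_pos s0 R in simp)
  also have "\<dots> \<le> bessel_const * (s / R)"
    using bessel_const_pos s0 R by (intro mult_right_mono) (auto simp: mult_le_cancel_left1)
  also have "\<dots> \<le> bessel_const * (M / sqrt (M^2 + \<nu>^2))"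
    using divide_sqrt_add_square_mono[OF s, of \<nu>] \<nu> bessel_const_pos
    by (intro mult_left_mono) (auto simp: R_def)
  finally show ?thesis .
qed

text \<open>For \<open>s \<le> 2t\<close> the factor \<open>\<surd>R\<close> is absorbed by \<open>\<surd>(1 + tR/s)\<close>; for \<open>s > 2t\<close> the exponential
  \<open>exp ((t - s) R/s) \<le> exp (-R/2)\<close> absorbs it instead.\<close>
lemma besselK_besselI_times_s_le:
  fixes n :: int and s t M \<nu> :: real
  assumes t: "0 \<le> t" "t \<le> s" and s: "0 < s" "s \<le> M" and \<nu>: "\<nu> = \<bar>real_of_int n\<bar> + 1"
  defines "R\<^sub>M \<equiv> sqrt (M^2 + \<nu>^2)"
  shows "besselK (n + 1) s * besselI n t * s
           \<le> bessel_const * (sqrt 2 * exp (- R\<^sub>M / M * (s - t)) + exp (- (s + \<nu>) / 8))"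
proof -
  define R where "R = sqrt (s^2 + \<nu>^2)"
  have \<nu>1: "1 \<le> \<nu>" using \<nu> by simp
  have R\<nu>: "\<nu> \<le> R" and Rs: "s \<le> R" unfolding R_def by (rule real_le_rsqrt; simp)+
  have "s / R \<le> M / R\<^sub>M"
    using divide_sqrt_add_square_mono[of s M \<nu>] s \<nu>1 by (simp add: R_def R\<^sub>M_def)
  then have rate: "R\<^sub>M / M \<le> R / s"
    using s R\<nu> \<nu>1 by (simp add: R\<^sub>M_def divide_simps mult.commute add_pos_nonneg)
  define q where "q = sqrt (1 + t * R / s)"
  define E where "E = exp ((t - s) * R / s)"
  have q: "1 \<le> q" using s t R\<nu> \<nu>1 by (simp add: q_def)
  have bound: "sqrt R * E / q \<le> sqrt 2 * exp (- R\<^sub>M / M * (s - t)) + exp (- (s + \<nu>) / 8)"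
  proof (cases "s \<le> 2 * t")
    case True
    have "s * R \<le> (2 * t) * R" using True R\<nu> \<nu>1 by (intro mult_right_mono) auto
    then have "R \<le> 2 * (1 + t * R / s)" using s by (simp add: field_simps)
    then have "sqrt R \<le> sqrt 2 * q" unfolding q_def real_sqrt_mult[symmetric] by (rule real_sqrt_le_mono)
    moreover have "E \<le> exp (- R\<^sub>M / M * (s - t))"
    proof -
      have "(s - t) * (R\<^sub>M / M) \<le> (s - t) * (R / s)" using rate t by (intro mult_left_mono) auto
      moreover have "(t - s) * R / s = - ((s - t) * (R / s))" "- R\<^sub>M / M * (s - t) = - ((s - t) * (R\<^sub>M / M))"
        using s by (simp_all add: field_simps)
      ultimately show ?thesis unfolding E_def by (simp only:) simp
    qed
    ultimately have "sqrt R * E \<le> (sqrt 2 * q) * exp (- R\<^sub>M / M * (s - t))"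
      using q by (intro mult_mono) (auto simp: E_def)
    then have "sqrt R * E / q \<le> sqrt 2 * exp (- R\<^sub>M / M * (s - t))"
      using q by (simp add: divide_simps mult_ac)
    then show ?thesis by (simp add: add_increasing2)
  next
    case False
    have "s * R \<le> (2 * (s - t)) * R" using False R\<nu> \<nu>1 by (intro mult_right_mono) auto
    then have "(t - s) * R / s \<le> - R / 2" using s by (simp add: field_simps)
    then have "E \<le> exp (- R / 2)" by (simp add: E_def)
    have "sqrt R * E / q \<le> sqrt R * E"
    proof -
      have "0 \<le> sqrt R * E" using R\<nu> \<nu>1 by (simp add: E_def)
      then show ?thesis using q by (simp add: divide_le_eq mult_le_cancel_left1)
    qed
    also have "\<dots> \<le> exp (R / 4) * exp (- R / 2)"
      using sqrt_le_exp_quarter[of R] \<open>E \<le> exp (- R / 2)\<close> R\<nu> \<nu>1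
      by (intro mult_mono) (auto simp: E_def)
    also have "\<dots> = exp (- R / 4)" by (simp add: mult_exp_exp)
    also have "\<dots> \<le> exp (- (s + \<nu>) / 8)" using Rs R\<nu> by simp
    finally show ?thesis by (simp add: add_increasing)
  qed
  have "besselK (n + 1) s * besselI n t * s \<le> besselK (n + 1) s * \<bar>besselI n t\<bar> * s"
    using s besselK_nonneg[of s "n + 1"] by (intro mult_right_mono mult_left_mono) auto
  also have "\<dots> \<le> bessel_const * (sqrt R / s) * E / q * s"
    using besselK_mult_abs_besselI_le[OF s(1) t(1) \<nu>] s
    by (intro mult_right_mono) (auto simp: R_def E_def q_def)
  also have "\<dots> = bessel_const * (sqrt R * E / q)" using s by simp
  also have "\<dots> \<le> bessel_const * (sqrt 2 * exp (- R\<^sub>M / M * (s - t)) + exp (- (s + \<nu>) / 8))"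
    using bound bessel_const_pos by (intro mult_left_mono) auto
  finally show ?thesis .
qed

lemma integral_besselK_besselI_ds_le:
  fixes n :: int and t M \<nu> :: real
  assumes t: "0 \<le> t" "t \<le> M" and \<nu>: "\<nu> = \<bar>real_of_int n\<bar> + 1"
  shows "integral {t..M} (\<lambda>s. besselK (n + 1) s * besselI n t * s) \<le> 18 * bessel_const * (M / sqrt (M^2 + \<nu>^2))"
proof (cases "M = 0")
  case True
  then show ?thesis using t by simp
next
  case False
  then have M: "0 < M" using t by simp
  have \<nu>1: "1 \<le> \<nu>" using \<nu> by simp
  define R\<^sub>M where "R\<^sub>M = sqrt (M^2 + \<nu>^2)"
  have R\<^sub>M: "0 < R\<^sub>M" "R\<^sub>M \<le> M + \<nu>"
    using M \<nu>1 by (auto simp: R\<^sub>M_def add_nonneg_pos power2_sum intro!: real_le_lsqrt)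
  define c where "c = R\<^sub>M / M"
  have c: "0 < c" using M R\<^sub>M by (simp add: c_def)
  define G\<^sub>1 where "G\<^sub>1 = bessel_const * sqrt 2 * (1 - exp (- c * (M - t))) / c"
  define G\<^sub>2 where "G\<^sub>2 = 8 * bessel_const * (exp (- (t + \<nu>) / 8) - exp (- (M + \<nu>) / 8))"
  define g where "g s = bessel_const * sqrt 2 * exp (- c * s + c * t) + bessel_const * exp (- (1/8) * s + - (\<nu> / 8))"
    for s
  have exponents: "- c * x + c * t = - c * (x - t)" "- (1/8) * x + - (\<nu> / 8) = - (x + \<nu>) / 8" for x
    by (simp_all add: algebra_simps)
  have "(g has_integral G\<^sub>1 + G\<^sub>2) {t..M}"
  proof -
    have h1: "((\<lambda>s. bessel_const * sqrt 2 * exp (- c * s + c * t)) has_integral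
            bessel_const * sqrt 2 * ((exp (- c * M + c * t) - exp (- c * t + c * t)) / - c)) {t..M}"
      using c t by (intro has_integral_mult_right has_integral_exp_affine) auto
    moreover have h2: "((\<lambda>s. bessel_const * exp (- (1/8) * s + - (\<nu> / 8))) has_integral
            bessel_const * ((exp (- (1/8) * M + - (\<nu> / 8)) - exp (- (1/8) * t + - (\<nu> / 8))) / - (1/8))) {t..M}"
      using t by (intro has_integral_mult_right has_integral_exp_affine) auto
    have G\<^sub>1_eq: "bessel_const * sqrt 2 * ((exp (- c * M + c * t) - exp (- c * t + c * t)) / - c) = G\<^sub>1"
      unfolding exponents by (simp add: G\<^sub>1_def algebra_simps minus_divide_left)
    have G\<^sub>2_eq: "bessel_const * ((exp (- (1/8) * M + - (\<nu> / 8)) - exp (- (1/8) * t + - (\<nu> / 8))) / - (1/8)) = G\<^sub>2"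
      unfolding exponents by (simp add: G\<^sub>2_def algebra_simps)
    show ?thesis
      unfolding g_def[abs_def] G\<^sub>1_eq[symmetric] G\<^sub>2_eq[symmetric] by (rule has_integral_add[OF h1 h2])
  qed
  moreover have "besselK (n + 1) s * besselI n t * s \<le> g s" if "s \<in> {t..M}" for s
  proof -
    have "g s = bessel_const * (sqrt 2 * exp (- c * (s - t)) + exp (- (s + \<nu>) / 8))"
      by (simp only: g_def exponents distrib_left mult.assoc)
    moreover have "besselK (n + 1) s * besselI n t * s
                   \<le> bessel_const * (sqrt 2 * exp (- c * (s - t)) + exp (- (s + \<nu>) / 8))"
    proof (cases "s = 0")
      case True
      then show ?thesis using bessel_const_pos by (simp add: add_nonneg_nonneg)
    next
      case False
      then show ?thesis
        using that t besselK_besselI_times_s_le[of t s M \<nu> n] \<nu> by (simp add: c_def R\<^sub>M_def)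
    qed
    ultimately show ?thesis by simp
  qed
  moreover have "0 \<le> G\<^sub>1 + G\<^sub>2"
    using c t bessel_const_pos by (simp add: G\<^sub>1_def G\<^sub>2_def)
  ultimately have "integral {t..M} (\<lambda>s. besselK (n + 1) s * besselI n t * s) \<le> G\<^sub>1 + G\<^sub>2"
    by (intro integral_le_has_integral)
  moreover have "G\<^sub>1 \<le> 2 * bessel_const * (M / R\<^sub>M)"
  proof -
    have "sqrt 2 \<le> 2" by (simp add: real_le_lsqrt)
    moreover have "1 - exp (- c * (M - t)) \<le> 1" by simp
    ultimately have "G\<^sub>1 \<le> bessel_const * 2 * 1 / c"
      unfolding G\<^sub>1_def using bessel_const_pos c t
      by (intro divide_right_mono mult_mono) auto
    then show ?thesis using M R\<^sub>M by (simp add: c_def mult.commute)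
  qed
  moreover have "G\<^sub>2 \<le> 16 * bessel_const * (M / R\<^sub>M)"
  proof -
    have "2 * M / (M + \<nu>) \<le> 2 * M / R\<^sub>M"
      using M R\<^sub>M by (intro divide_left_mono) auto
    then have "exp (- (t + \<nu>) / 8) - exp (- (M + \<nu>) / 8) \<le> 2 * M / R\<^sub>M"
      using exp_neg_eighth_diff_le[OF t \<nu>1] by linarith
    then have "G\<^sub>2 \<le> 8 * bessel_const * (2 * M / R\<^sub>M)"
      unfolding G\<^sub>2_def using bessel_const_pos by (intro mult_left_mono) auto
    then show ?thesis by simp
  qed
  ultimately have "integral {t..M} (\<lambda>s. besselK (n + 1) s * besselI n t * s)
                    \<le> 2 * bessel_const * (M / R\<^sub>M) + 16 * bessel_const * (M / R\<^sub>M)"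
    by linarith
  also have "\<dots> = 18 * bessel_const * (M / sqrt (M^2 + \<nu>^2))" by (simp add: R\<^sub>M_def algebra_simps)
  finally show ?thesis .
qed

theorem lemma3p4:
  shows "\<exists>C::real. \<forall>m n::int. m \<noteq> 0 \<longrightarrow>
           calI1 m n \<le> C / sqrt (1 + (real_of_int m)\<^sup>2 + (real_of_int n)\<^sup>2) \<and>
           calI2 m n \<le> C / sqrt (1 + (real_of_int m)\<^sup>2 + (real_of_int n)\<^sup>2)"
proof (intro exI[of _ "18 * bessel_const"] allI impI)
  fix m n :: int assume "m \<noteq> 0"
  define M where "M = \<bar>real_of_int m\<bar>"
  define \<nu> where "\<nu> = \<bar>real_of_int n\<bar> + 1"
  define R where "R = sqrt (M^2 + \<nu>^2)"
  have M: "0 < M" using \<open>m \<noteq> 0\<close> by (simp add: M_def)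
  have "1 + (real_of_int m)\<^sup>2 + (real_of_int n)\<^sup>2 \<le> M^2 + \<nu>^2"
    by (simp add: M_def \<nu>_def power2_eq_square algebra_simps)
  then have R: "sqrt (1 + (real_of_int m)\<^sup>2 + (real_of_int n)\<^sup>2) \<le> R" "0 < R"
    using M by (simp_all add: R_def add_pos_nonneg)
  have "calI1 m n \<le> 1 / M * (bessel_const * (M / R))"
    unfolding calI1_def M_def[symmetric] using M
    by (intro mult_left_mono cSUP_least) (use integral_besselK_besselI_dt_le[OF _ _ \<nu>_def] in \<open>auto simp: R_def\<close>)
  also have "\<dots> = bessel_const / R" using M by simp
  also have "\<dots> \<le> 18 * bessel_const / R" using R bessel_const_pos by (intro divide_right_mono) auto
  finally have I1: "calI1 m n \<le> 18 * bessel_const / R" .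
  have "calI2 m n \<le> 1 / M * (18 * bessel_const * (M / R))"
    unfolding calI2_def M_def[symmetric] using M
    by (intro mult_left_mono cSUP_least) (use integral_besselK_besselI_ds_le[OF _ _ \<nu>_def] in \<open>auto simp: R_def\<close>)
  then have I2: "calI2 m n \<le> 18 * bessel_const / R" using M by simp
  have "18 * bessel_const / R \<le> 18 * bessel_const / sqrt (1 + (real_of_int m)\<^sup>2 + (real_of_int n)\<^sup>2)"
    using R bessel_const_pos by (intro divide_left_mono) (auto simp: add_pos_nonneg)
  with I1 I2 show "calI1 m n \<le> 18 * bessel_const / sqrt (1 + (real_of_int m)\<^sup>2 + (real_of_int n)\<^sup>2) \<and>
                   calI2 m n \<le> 18 * bessel_const / sqrt (1 + (real_of_int m)\<^sup>2 + (real_of_int n)\<^sup>2)"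
    by linarith
qed

end
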